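(* Let $\gamma\in(0,1)$ and $\alpha_n=\gamma/(1+n\gamma)$ for $n\ge0$. Then for nonnegative integers $n,s$ and a positive integer $r$, \[ \mu_{n,r,s}=\begin{cases}\delta_{n+r,s}&\text{if } s\ge n+r,\\[2pt] -\dfrac{n\gamma^2}{(1+(r-1)\gamma)(1+s\gamma)}&\text{if } n-1<s<n+r,\\[2pt] \dfrac{(1-\gamma)\gamma}{(1+(r-1)\gamma)(1+s\gamma)}&\text{if } 0\le s\le n-1.\end{cases} \]
   Context: For a polynomial $f(z)=\sum_{k=0}^n a_kz^k$ of degree $n$, write $\overline{f}(z)=\sum_k\overline{a_k}z^k$ and $f^*(z)=z^n\overline{f}(1/z)$. Given $(\alpha_n)$ with $|\alpha_n|<1$, define monic $\Phi_n$ by $\Phi_0=1$, $\Phi_{n+1}(z)=z\Phi_n(z)-\overline{\alpha_n}\Phi_n^*(z)$. Let $\mathcal{L}$ be the unique linear functional on Laurent polynomials with $\mathcal{L}(1)=1$ and $\mathcal{L}(\Phi_m(z)\overline{\Phi_n}(1/z))=0$ for $m\neq n$; set $\langle f,g\rangle=\mathcal{L}(f(z)\overline{g}(1/z))$ and $\mu_{n,r,s}=\langle\Phi_s(z),z^n\Phi_r(z)\rangle/\langle\Phi_s,\Phi_s\rangle$. *)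

theory Defs
  imports Complex_Main "HOL-Computational_Algebra.Polynomial"
begin

definition conj_poly :: "complex poly \<Rightarrow> complex poly" where
  "conj_poly f = map_poly cnj f"

text \<open>\<open>f^*(z) = z^n \<bar>f(1/z)\<close>, n = degree f: coefficient reversal\<close>
definition star_poly :: "complex poly \<Rightarrow> complex poly" where
  "star_poly f = reflect_poly (conj_poly f)"

fun Phi :: "(nat \<Rightarrow> complex) \<Rightarrow> nat \<Rightarrow> complex poly" where
  "Phi \<alpha> 0 = 1"
| "Phi \<alpha> (Suc n) = pCons 0 (Phi \<alpha> n) - smult (cnj (\<alpha> n)) (star_poly (Phi \<alpha> n))"

text \<open>A linear functional on Laurent polynomials is determined by its moments
  \<open>mom k = L(z^k)\<close>, \<open>k \<in> \<int>\<close>.  \<open>lpair mom f g = L(f(z) \<bar>g(1/z))\<close>.\<close>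
definition lpair :: "(int \<Rightarrow> complex) \<Rightarrow> complex poly \<Rightarrow> complex poly \<Rightarrow> complex" where
  "lpair mom f g = (\<Sum>i\<le>degree f. \<Sum>j\<le>degree g.
      coeff f i * cnj (coeff g j) * mom (int i - int j))"

definition moments :: "(nat \<Rightarrow> complex) \<Rightarrow> int \<Rightarrow> complex" where
  "moments \<alpha> = (THE mom. mom 0 = 1 \<and>
      (\<forall>m n. m \<noteq> n \<longrightarrow> lpair mom (Phi \<alpha> m) (Phi \<alpha> n) = 0))"

definition ip :: "(nat \<Rightarrow> complex) \<Rightarrow> complex poly \<Rightarrow> complex poly \<Rightarrow> complex" where
  "ip \<alpha> f g = lpair (moments \<alpha>) f g"

definition mu :: "(nat \<Rightarrow> complex) \<Rightarrow> nat \<Rightarrow> nat \<Rightarrow> nat \<Rightarrow> complex" where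
  "mu \<alpha> n r s = ip \<alpha> (Phi \<alpha> s) (monom 1 n * Phi \<alpha> r) / ip \<alpha> (Phi \<alpha> s) (Phi \<alpha> s)"

end

theory Submission
  imports Defs
begin

(* With alpha_n = gamma / (1 + n gamma) the recursion produces
   Phi_n = z^n - kappa_n (1 + z + ... + z^(n-1)),  kappa_n = gamma / (1 + (n - 1) gamma),
   because alpha_n = kappa_(n+1) and kappa_n (1 - kappa_(n+1)) = kappa_(n+1).
   These polynomials are orthogonal for the moments L(1) = 1, L(z^k) = gamma (k <> 0), i.e. for
   the measure (1 - gamma) d theta / 2 pi + gamma delta_1, whose pairing is
   <f, g> = gamma f(1) conj (g(1)) + (1 - gamma) sum_k f_k conj (g_k).
   Orthogonality to 1 of the monic Phi_m determines the moments recursively, so this is the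
   functional of the statement.  Pairing Phi_s with a real polynomial g gives
   (1 - gamma) (g_s + kappa_s sum_(k >= s) g_k), and for g = z^n Phi_r this tail sum is
   elementary in each of the three ranges of s. *)


lemma degree_star_poly_le: "degree (star_poly p) \<le> degree p"
  using degree_reflect_poly_le[of "conj_poly p"]
  by (simp add: star_poly_def conj_poly_def degree_map_poly)

lemma Phi_monic: "degree (Phi \<alpha> n) = n \<and> coeff (Phi \<alpha> n) n = 1"
proof (induction n)
  case (Suc n)
  have reflected: "degree (smult (cnj (\<alpha> n)) (star_poly (Phi \<alpha> n))) \<le> n"
    using Suc degree_star_poly_le degree_smult_le order.trans by metis
  have "coeff (star_poly (Phi \<alpha> n)) (Suc n) = 0"
    using Suc degree_star_poly_le[of "Phi \<alpha> n"] by (intro coeff_eq_0) simp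
  then have lead: "coeff (Phi \<alpha> (Suc n)) (Suc n) = 1"
    using Suc by simp
  have "degree (Phi \<alpha> (Suc n)) \<le> Suc n"
    using Suc reflected by (auto intro!: degree_diff_le)
  moreover have "Suc n \<le> degree (Phi \<alpha> (Suc n))"
    using lead by (intro le_degree) simp
  ultimately show ?case
    using lead by (intro conjI antisym)
qed simp

lemma degree_Phi [simp]: "degree (Phi \<alpha> n) = n"
  using Phi_monic by (simp only:)

lemma coeff_Phi_degree: "coeff (Phi \<alpha> n) n = 1"
  using Phi_monic by (simp only:)

lemma lpair_Phi_one:
  "lpair mom (Phi \<alpha> m) 1 = mom (int m) + (\<Sum>i<m. coeff (Phi \<alpha> m) i * mom (int i))"
  by (simp add: lpair_def coeff_Phi_degree flip: lessThan_Suc_atMost)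

lemma lpair_one_Phi:
  "lpair mom 1 (Phi \<alpha> m) = mom (- int m) + (\<Sum>i<m. cnj (coeff (Phi \<alpha> m) i) * mom (- int i))"
  by (simp add: lpair_def coeff_Phi_degree flip: lessThan_Suc_atMost)

lemma moments_unique:
  assumes "mom 0 = 1" "\<And>m. 0 < m \<Longrightarrow> lpair mom (Phi \<alpha> m) 1 = 0 \<and> lpair mom 1 (Phi \<alpha> m) = 0"
    and "mom' 0 = 1" "\<And>m. 0 < m \<Longrightarrow> lpair mom' (Phi \<alpha> m) 1 = 0 \<and> lpair mom' 1 (Phi \<alpha> m) = 0"
  shows "mom = mom'"
proof -
  have "mom (int m) = mom' (int m) \<and> mom (- int m) = mom' (- int m)" for m
  proof (induction m rule: less_induct)
    case (less m)
    show ?case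
    proof (cases "m = 0")
      case False
      have "(\<Sum>i<m. coeff (Phi \<alpha> m) i * mom (int i)) = (\<Sum>i<m. coeff (Phi \<alpha> m) i * mom' (int i))"
        "(\<Sum>i<m. cnj (coeff (Phi \<alpha> m) i) * mom (- int i)) = (\<Sum>i<m. cnj (coeff (Phi \<alpha> m) i) * mom' (- int i))"
        using less by (auto intro: sum.cong)
      then show ?thesis
        using assms(2,4)[of m] False by (simp add: lpair_Phi_one lpair_one_Phi add_eq_0_iff)
    qed (simp add: assms)
  qed
  then show ?thesis
    by (metis ext int_cases2)
qed

lemma moments_eqI:
  assumes "mom 0 = 1" "\<And>m n. m \<noteq> n \<Longrightarrow> lpair mom (Phi \<alpha> m) (Phi \<alpha> n) = 0"
  shows "moments \<alpha> = mom"
proof -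
  have against_one: "lpair M (Phi \<alpha> m) 1 = 0 \<and> lpair M 1 (Phi \<alpha> m) = 0"
    if "\<forall>m n. m \<noteq> n \<longrightarrow> lpair M (Phi \<alpha> m) (Phi \<alpha> n) = 0" "0 < m" for M m
    using that by (metis Phi.simps(1) less_irrefl)
  show ?thesis
    unfolding moments_def
  proof (rule the_equality)
    fix mom'
    assume "mom' 0 = 1 \<and> (\<forall>m n. m \<noteq> n \<longrightarrow> lpair mom' (Phi \<alpha> m) (Phi \<alpha> n) = 0)"
    then show "mom' = mom"
      using assms against_one by (intro moments_unique[of mom' \<alpha> mom]) auto
  qed (use assms in blast)
qed

definition mixture_moments :: "complex \<Rightarrow> int \<Rightarrow> complex" where
  "mixture_moments c k = (if k = 0 then 1 else c)"

lemma lpair_mixture_moments: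
  "lpair (mixture_moments c) f g
     = c * poly f 1 * cnj (poly g 1) + (1 - c) * (\<Sum>i\<le>degree f. coeff f i * cnj (coeff g i))"
proof -
  have diagonal: "(\<Sum>j\<le>degree g. (if i = j then cnj (coeff g j) else 0)) = cnj (coeff g i)" for i
    by (auto simp: coeff_eq_0)
  have "lpair (mixture_moments c) f g = (\<Sum>i\<le>degree f. \<Sum>j\<le>degree g.
      c * (coeff f i * cnj (coeff g j)) + (1 - c) * (coeff f i * (if i = j then cnj (coeff g j) else 0)))"
    unfolding lpair_def mixture_moments_def by (intro sum.cong) (auto simp: algebra_simps)
  also have "\<dots> = c * (\<Sum>i\<le>degree f. coeff f i) * (\<Sum>j\<le>degree g. cnj (coeff g j))
      + (1 - c) * (\<Sum>i\<le>degree f. coeff f i * cnj (coeff g i))"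
    by (simp add: sum.distrib diagonal sum_distrib_left sum_distrib_right sum_product mult.assoc
        flip: sum_distrib_left)
  finally show ?thesis
    by (simp add: poly_altdef)
qed

definition kappa :: "real \<Rightarrow> nat \<Rightarrow> real" where
  "kappa \<gamma> n = \<gamma> / (1 + (real n - 1) * \<gamma>)"

definition phi_coeff :: "real \<Rightarrow> nat \<Rightarrow> nat \<Rightarrow> real" where
  "phi_coeff \<gamma> n i = (if i = n then 1 else if i < n then - kappa \<gamma> n else 0)"

lemma sum_phi_coeff:
  "(\<Sum>j<t. phi_coeff \<gamma> r j) = (if t \<le> r then - real t * kappa \<gamma> r else 1 - real r * kappa \<gamma> r)"
  by (induction t) (auto simp: phi_coeff_def algebra_simps)

lemma sum_lessThan_shift:
  fixes h :: "nat \<Rightarrow> 'a :: comm_monoid_add"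
  shows "(\<Sum>i<s. if i < n then 0 else h (i - n)) = (\<Sum>j<s - n. h j)"
proof (induction s)
  case (Suc s)
  then show ?case
    by (cases "n \<le> s") (simp_all add: Suc_diff_le)
qed simp

definition shifted_pairing :: "real \<Rightarrow> nat \<Rightarrow> nat \<Rightarrow> nat \<Rightarrow> real" where
  "shifted_pairing \<gamma> n r s = (if s < n then 0 else phi_coeff \<gamma> r (s - n))
     + kappa \<gamma> s * (1 - real r * kappa \<gamma> r - (\<Sum>j<s - n. phi_coeff \<gamma> r j))"

lemma shifted_pairing_above: "n + r < s \<Longrightarrow> shifted_pairing \<gamma> n r s = 0"
  by (simp add: shifted_pairing_def sum_phi_coeff) (simp add: phi_coeff_def)

lemma shifted_pairing_diagonal: "shifted_pairing \<gamma> n r (n + r) = 1 + kappa \<gamma> (n + r)"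
  by (simp add: shifted_pairing_def sum_phi_coeff phi_coeff_def)

context
  fixes \<gamma> :: real
  assumes gamma_pos: "0 < \<gamma>" and gamma_less_one: "\<gamma> < 1"
begin

lemma kappa_denom_pos: "0 < 1 + (real n - 1) * \<gamma>"
proof -
  have "- \<gamma> \<le> (real n - 1) * \<gamma>"
    using gamma_pos mult_right_mono[of "-1" "real n - 1" \<gamma>] by simp
  then show ?thesis
    using gamma_less_one by linarith
qed

lemma kappa_Suc: "kappa \<gamma> n * (1 - kappa \<gamma> (Suc n)) = kappa \<gamma> (Suc n)"
proof -
  have "1 - kappa \<gamma> (Suc n) = (1 + (real n - 1) * \<gamma>) / (1 + real n * \<gamma>)"
    using kappa_denom_pos[of "Suc n"] by (simp add: kappa_def field_simps)
  then show ?thesis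
    using kappa_denom_pos[of n] by (simp add: kappa_def)
qed

lemma one_minus_kappa: "1 - real n * kappa \<gamma> n = (1 - \<gamma>) / (1 + (real n - 1) * \<gamma>)"
  using kappa_denom_pos[of n] by (simp add: kappa_def field_simps)

lemma one_plus_kappa: "1 + kappa \<gamma> n = (1 + real n * \<gamma>) / (1 + (real n - 1) * \<gamma>)"
  using kappa_denom_pos[of n] by (simp add: kappa_def field_simps)

lemma shifted_pairing_middle:
  assumes "n \<le> s" "s < n + r"
  shows "shifted_pairing \<gamma> n r s
    = - (real n * \<gamma>\<^sup>2) / ((1 + (real s - 1) * \<gamma>) * (1 + (real r - 1) * \<gamma>))"
proof -
  have "s - n < r"
    using assms by linarith
  then have "shifted_pairing \<gamma> n r s
      = - kappa \<gamma> r + kappa \<gamma> s * (1 - (real r - real s + real n) * kappa \<gamma> r)"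
    using assms by (simp add: shifted_pairing_def sum_phi_coeff phi_coeff_def of_nat_diff algebra_simps)
  also have "\<dots> = - (real n * \<gamma>\<^sup>2) / ((1 + (real s - 1) * \<gamma>) * (1 + (real r - 1) * \<gamma>))"
  proof -
    have "1 + (real s - 1) * \<gamma> \<noteq> 0" "1 + (real r - 1) * \<gamma> \<noteq> 0"
      using kappa_denom_pos by (metis less_irrefl)+
    then show ?thesis
      unfolding kappa_def by (simp add: divide_simps) (simp add: algebra_simps power2_eq_square)
  qed
  finally show ?thesis .
qed

lemma shifted_pairing_below:
  assumes "s < n"
  shows "shifted_pairing \<gamma> n r s
    = (1 - \<gamma>) * \<gamma> / ((1 + (real s - 1) * \<gamma>) * (1 + (real r - 1) * \<gamma>))"
  using assms by (simp add: shifted_pairing_def one_minus_kappa) (simp add: kappa_def)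

context
  fixes \<alpha> :: "nat \<Rightarrow> complex"
  assumes alpha_eq: "\<And>k. \<alpha> k = complex_of_real (\<gamma> / (1 + real k * \<gamma>))"
begin

lemma alpha_eq_kappa: "\<alpha> n = of_real (kappa \<gamma> (Suc n))"
  by (simp add: alpha_eq kappa_def)

lemma coeff_Phi: "coeff (Phi \<alpha> n) i = of_real (phi_coeff \<gamma> n i)"
proof (induction n arbitrary: i)
  case 0
  then show ?case
    by (simp add: phi_coeff_def coeff_1)
next
  case (Suc n)
  have real_coeffs: "conj_poly (Phi \<alpha> n) = Phi \<alpha> n"
    by (rule poly_eqI) (simp add: conj_poly_def coeff_map_poly Suc.IH)
  have "coeff (Phi \<alpha> (Suc n)) i = of_real ((case i of 0 \<Rightarrow> 0 | Suc j \<Rightarrow> phi_coeff \<gamma> n j)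
      - kappa \<gamma> (Suc n) * (if i \<le> n then phi_coeff \<gamma> n (n - i) else 0))"
    by (simp add: star_poly_def real_coeffs coeff_pCons coeff_reflect_poly Suc.IH alpha_eq_kappa
        split: nat.split)
  also have "(case i of 0 \<Rightarrow> 0 | Suc j \<Rightarrow> phi_coeff \<gamma> n j)
      - kappa \<gamma> (Suc n) * (if i \<le> n then phi_coeff \<gamma> n (n - i) else 0) = phi_coeff \<gamma> (Suc n) i"
    using kappa_Suc[of n] by (auto simp: phi_coeff_def algebra_simps split: nat.split)
  finally show ?case .
qed

lemma poly_Phi_one: "poly (Phi \<alpha> n) 1 = of_real (1 - real n * kappa \<gamma> n)"
  by (simp add: poly_altdef coeff_Phi sum_phi_coeff phi_coeff_def flip: of_real_sum lessThan_Suc_atMost)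

lemma lpair_mixture_Phi_left:
  "lpair (mixture_moments \<gamma>) (Phi \<alpha> s) g = of_real (1 - \<gamma>) *
     (cnj (coeff g s) + of_real (kappa \<gamma> s) * (cnj (poly g 1) - (\<Sum>i<s. cnj (coeff g i))))"
proof -
  have coeff_sum: "(\<Sum>i\<le>s. coeff (Phi \<alpha> s) i * cnj (coeff g i))
      = cnj (coeff g s) - of_real (kappa \<gamma> s) * (\<Sum>i<s. cnj (coeff g i))"
    by (simp add: coeff_Phi phi_coeff_def sum_distrib_left sum_negf flip: lessThan_Suc_atMost)
  have at_one: "of_real \<gamma> * poly (Phi \<alpha> s) 1 = complex_of_real ((1 - \<gamma>) * kappa \<gamma> s)"
    using kappa_denom_pos[of s] by (simp add: poly_Phi_one kappa_def field_simps)
  have "lpair (mixture_moments \<gamma>) (Phi \<alpha> s) g = of_real \<gamma> * poly (Phi \<alpha> s) 1 * cnj (poly g 1)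
      + (1 - of_real \<gamma>) * (cnj (coeff g s) - of_real (kappa \<gamma> s) * (\<Sum>i<s. cnj (coeff g i)))"
    by (simp add: lpair_mixture_moments coeff_sum)
  then show ?thesis
    unfolding at_one by (simp add: algebra_simps)
qed

lemma lpair_mixture_Phi_shifted:
  "lpair (mixture_moments \<gamma>) (Phi \<alpha> s) (monom 1 n * Phi \<alpha> r)
     = of_real ((1 - \<gamma>) * shifted_pairing \<gamma> n r s)"
proof -
  have coeffs: "coeff (monom 1 n * Phi \<alpha> r) i = of_real (if i < n then 0 else phi_coeff \<gamma> r (i - n))" for i
    by (simp add: coeff_monom_mult coeff_Phi del: Phi.simps)
  have "(\<Sum>i<s. cnj (coeff (monom 1 n * Phi \<alpha> r) i))
      = of_real (\<Sum>i<s. if i < n then 0 else phi_coeff \<gamma> r (i - n))"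
    unfolding coeffs of_real_sum by simp
  also have "\<dots> = of_real (\<Sum>j<s - n. phi_coeff \<gamma> r j)"
    by (simp only: sum_lessThan_shift)
  finally have "(\<Sum>i<s. cnj (coeff (monom 1 n * Phi \<alpha> r) i)) = of_real (\<Sum>j<s - n. phi_coeff \<gamma> r j)" .
  then show ?thesis
    by (simp add: lpair_mixture_Phi_left coeffs poly_Phi_one poly_monom shifted_pairing_def del: Phi.simps)
qed

lemma lpair_mixture_Phi_orthogonal:
  assumes "m \<noteq> k"
  shows "lpair (mixture_moments \<gamma>) (Phi \<alpha> m) (Phi \<alpha> k) = 0"
proof -
  have "shifted_pairing \<gamma> 0 k m = 0"
    using assms by (cases "k < m") (simp_all add: shifted_pairing_above shifted_pairing_middle)
  then show ?thesis
    using lpair_mixture_Phi_shifted[of m 0 k] by simp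
qed

lemma moments_eq_mixture: "moments \<alpha> = mixture_moments \<gamma>"
  by (rule moments_eqI) (simp_all add: mixture_moments_def lpair_mixture_Phi_orthogonal)

lemma mu_eq_shifted_pairing: "mu \<alpha> n r s = of_real (shifted_pairing \<gamma> n r s / (1 + kappa \<gamma> s))"
proof -
  have "ip \<alpha> (Phi \<alpha> s) (Phi \<alpha> s) = of_real ((1 - \<gamma>) * (1 + kappa \<gamma> s))"
    using lpair_mixture_Phi_shifted[of s 0 s] shifted_pairing_diagonal[of \<gamma> 0 s]
    by (simp add: ip_def moments_eq_mixture)
  then have "mu \<alpha> n r s
      = of_real ((1 - \<gamma>) * shifted_pairing \<gamma> n r s) / of_real ((1 - \<gamma>) * (1 + kappa \<gamma> s))"
    by (simp only: mu_def ip_def moments_eq_mixture lpair_mixture_Phi_shifted)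
  then show ?thesis
    using gamma_less_one by (simp only: of_real_divide[symmetric]) simp
qed

lemma mu_above:
  assumes "n + r \<le> s"
  shows "mu \<alpha> n r s = (if n + r = s then 1 else 0)"
proof (cases "n + r = s")
  case True
  have "0 < kappa \<gamma> s"
    using gamma_pos kappa_denom_pos[of s] by (simp add: kappa_def)
  then have "shifted_pairing \<gamma> n r s / (1 + kappa \<gamma> s) = 1"
    using True shifted_pairing_diagonal[of \<gamma> n r] by simp
  then show ?thesis
    using True by (simp only: mu_eq_shifted_pairing) simp
next
  case False
  then show ?thesis
    using assms by (simp add: mu_eq_shifted_pairing shifted_pairing_above)
qed

lemma mu_middle:
  assumes "n \<le> s" "s < n + r"
  shows "mu \<alpha> n r s = of_real (- (real n * \<gamma>\<^sup>2) / ((1 + (real r - 1) * \<gamma>) * (1 + real s * \<gamma>)))"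
  using assms kappa_denom_pos[of s] gamma_pos
  by (simp add: mu_eq_shifted_pairing shifted_pairing_middle one_plus_kappa add_pos_nonneg)

lemma mu_below:
  assumes "s < n"
  shows "mu \<alpha> n r s = of_real ((1 - \<gamma>) * \<gamma> / ((1 + (real r - 1) * \<gamma>) * (1 + real s * \<gamma>)))"
  using assms kappa_denom_pos[of s] gamma_pos
  by (simp add: mu_eq_shifted_pairing shifted_pairing_below one_plus_kappa add_pos_nonneg)

end

end

theorem proposition4p6:
  fixes \<gamma> :: real and \<alpha> :: "nat \<Rightarrow> complex" and n r s :: nat
  assumes "0 < \<gamma>" and "\<gamma> < 1"
    and "\<And>k. \<alpha> k = complex_of_real (\<gamma> / (1 + real k * \<gamma>))"
    and "0 < r"
  shows "(n + r \<le> s \<longrightarrow> mu \<alpha> n r s = (if n + r = s then 1 else 0))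
       \<and> (real n - 1 < real s \<and> s < n + r \<longrightarrow> mu \<alpha> n r s =
            complex_of_real (- (real n * \<gamma>^2) / ((1 + (real r - 1) * \<gamma>) * (1 + real s * \<gamma>))))
       \<and> (real s \<le> real n - 1 \<longrightarrow> mu \<alpha> n r s =
            complex_of_real ((1 - \<gamma>) * \<gamma> / ((1 + (real r - 1) * \<gamma>) * (1 + real s * \<gamma>))))"
  using mu_above[OF assms(1-3)] mu_middle[OF assms(1-3)] mu_below[OF assms(1-3)]
  by (auto simp: power2_eq_square)

end
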